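(* $(\Sigma_m,\mathrm{Md})$ has the propagation property for pseudo units and the propagation property for pseudo zeros: for all $\Sigma_m$-terms $t,r$ and every $\Sigma_m$-context $C[\,]$, $\mathrm{Md}\vdash 1_t\cdot C[r]=1_t\cdot C[1_t\cdot r]$ and $\mathrm{Md}\vdash 0_t\cdot C[r]=0_t\cdot C[0_t\cdot r]$.
   Context: $\Sigma_m=(0,1,+,\cdot,-,{}^{-1})$; $\mathrm{Md}$ is the set of equations $(x+y)+z=x+(y+z)$, $x+y=y+x$, $x+0=x$, $x+(-x)=0$, $(x\cdot y)\cdot z=x\cdot(y\cdot z)$, $x\cdot y=y\cdot x$, $1\cdot x=x$, $x\cdot(y+z)=x\cdot y+x\cdot z$, $(x^{-1})^{-1}=x$, $x\cdot(x\cdot x^{-1})=x$. $1_t$ abbreviates $t\cdot t^{-1}$, $0_t$ abbreviates $1+(-1_t)$. A context $C[\,]$ is a term with one hole. *)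

theory Defs
  imports Main
begin

datatype trm =
    Var nat
  | Zero
  | One
  | Plus trm trm
  | Times trm trm
  | Neg trm
  | Inv trm

fun subst :: "(nat \<Rightarrow> trm) \<Rightarrow> trm \<Rightarrow> trm" where
  "subst \<sigma> (Var x) = \<sigma> x"
| "subst \<sigma> Zero = Zero"
| "subst \<sigma> One = One"
| "subst \<sigma> (Plus a b) = Plus (subst \<sigma> a) (subst \<sigma> b)"
| "subst \<sigma> (Times a b) = Times (subst \<sigma> a) (subst \<sigma> b)"
| "subst \<sigma> (Neg a) = Neg (subst \<sigma> a)"
| "subst \<sigma> (Inv a) = Inv (subst \<sigma> a)"

definition Md :: "(trm \<times> trm) set" where
  "Md = (let x = Var 0; y = Var 1; z = Var 2 in
    { (Plus (Plus x y) z, Plus x (Plus y z)),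
      (Plus x y, Plus y x),
      (Plus x Zero, x),
      (Plus x (Neg x), Zero),
      (Times (Times x y) z, Times x (Times y z)),
      (Times x y, Times y x),
      (Times One x, x),
      (Times x (Plus y z), Plus (Times x y) (Times x z)),
      (Inv (Inv x), x),
      (Times x (Times x (Inv x)), x) })"

inductive derivable :: "(trm \<times> trm) set \<Rightarrow> trm \<Rightarrow> trm \<Rightarrow> bool" for E where
  ax: "(s, t) \<in> E \<Longrightarrow> derivable E (subst \<sigma> s) (subst \<sigma> t)"
| refl: "derivable E t t"
| sym: "derivable E s t \<Longrightarrow> derivable E t s"
| trans: "derivable E s t \<Longrightarrow> derivable E t u \<Longrightarrow> derivable E s u"
| cong_plus: "derivable E s s' \<Longrightarrow> derivable E t t' \<Longrightarrow> derivable E (Plus s t) (Plus s' t')"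
| cong_times: "derivable E s s' \<Longrightarrow> derivable E t t' \<Longrightarrow> derivable E (Times s t) (Times s' t')"
| cong_neg: "derivable E s s' \<Longrightarrow> derivable E (Neg s) (Neg s')"
| cong_inv: "derivable E s s' \<Longrightarrow> derivable E (Inv s) (Inv s')"

datatype ctx =
    Hole
  | PlusL ctx trm
  | PlusR trm ctx
  | TimesL ctx trm
  | TimesR trm ctx
  | NegC ctx
  | InvC ctx

fun fill :: "ctx \<Rightarrow> trm \<Rightarrow> trm" where
  "fill Hole r = r"
| "fill (PlusL C b) r = Plus (fill C r) b"
| "fill (PlusR a C) r = Plus a (fill C r)"
| "fill (TimesL C b) r = Times (fill C r) b"
| "fill (TimesR a C) r = Times a (fill C r)"
| "fill (NegC C) r = Neg (fill C r)"
| "fill (InvC C) r = Inv (fill C r)"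

definition one_of :: "trm \<Rightarrow> trm" where
  "one_of t = Times t (Inv t)"

definition zero_of :: "trm \<Rightarrow> trm" where
  "zero_of t = Plus One (Neg (one_of t))"

end

theory Submission
  imports Defs
begin

text \<open>
  Both claims are instances of one fact: if e is an idempotent of the term
  algebra modulo Md, then multiplication by e "propagates" through any context, i.e.
  e * C[r] = e * C[e * r].  For the context constructors built from +, * and - this is
  ring arithmetic; the only interesting case is the inverse, where we need
  e * (e * x)\<inverse> = e * x\<inverse>.  That identity holds in every commutative ring with an
  involutive operation satisfying x * (x * x\<inverse>) = x (a meadow), because there the
  inverse is multiplicative and fixes idempotents; both follow from the uniqueness of
  pseudo-inverses in commutative semigroups.

  Finally 1_t and 0_t = 1 - 1_t are idempotent, which gives the theorem.
\<close>

lemma pseudo_inverse_unique: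
  fixes a b c :: "'a::ab_semigroup_mult"
  assumes aba: "a * b * a = a" and bab: "b * a * b = b"
      and aca: "a * c * a = a" and cac: "c * a * c = c"
  shows "b = c"
proof -
  have "a * b = a * c * (a * b)" using aca by (metis mult.assoc)
  moreover have "a * c = a * b * (a * c)" using aba by (metis mult.assoc)
  ultimately have ab_ac: "a * b = a * c" by (simp add: mult.commute)
  have "b = b * (a * c)" using bab ab_ac by (simp add: mult.assoc)
  also have "\<dots> = a * b * c" by (simp add: ac_simps)
  also have "\<dots> = a * c * c" using ab_ac by simp
  also have "\<dots> = c" using cac by (simp add: ac_simps)
  finally show ?thesis .
qed

lemma idempotent_complement:
  fixes e :: "'a::{comm_ring, comm_monoid_mult}"
  assumes "e * e = e"
  shows "(1 - e) * (1 - e) = 1 - e"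
  using assms by (simp add: algebra_simps)

text \<open>A meadow: a commutative ring with an involutive inverse satisfying
  x * (x * x\<inverse>) = x (the last two equations of Md).\<close>
locale meadow_inverse =
  fixes inv :: "'a::{comm_ring, comm_monoid_mult} \<Rightarrow> 'a"
  assumes inv_inv: "inv (inv x) = x"
      and mult_inv_absorb: "x * (x * inv x) = x"
begin

lemma pseudo_inverse: "x * inv x * x = x" "inv x * x * inv x = inv x"
  using mult_inv_absorb[of x] mult_inv_absorb[of "inv x"]
  by (simp_all add: inv_inv ac_simps)

text \<open>The inverse is multiplicative, by uniqueness of pseudo-inverses.\<close>
lemma inv_mult: "inv (a * b) = inv a * inv b"
proof (rule pseudo_inverse_unique[of "a * b"])
  have "a * b * (inv a * inv b) * (a * b) = (a * inv a * a) * (b * inv b * b)"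
    by (simp add: ac_simps)
  then show "a * b * (inv a * inv b) * (a * b) = a * b"
    by (simp add: pseudo_inverse)
  have "inv a * inv b * (a * b) * (inv a * inv b) = (inv a * a * inv a) * (inv b * b * inv b)"
    by (simp add: ac_simps)
  then show "inv a * inv b * (a * b) * (inv a * inv b) = inv a * inv b"
    by (simp add: pseudo_inverse)
qed (rule pseudo_inverse)+

text \<open>An idempotent is its own pseudo-inverse, hence fixed by the inverse.\<close>
lemma inv_idempotent:
  assumes "e * e = e"
  shows "inv e = e"
  by (rule pseudo_inverse_unique[of e]) (simp_all add: pseudo_inverse assms)

lemma idempotent_mult_inv:
  assumes "e * e = e"
  shows "e * inv (e * x) = e * inv x"
  using assms by (simp add: inv_mult inv_idempotent mult.assoc[symmetric])

lemma pseudo_unit_idempotent: "(x * inv x) * (x * inv x) = x * inv x"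
proof -
  have "(x * inv x) * (x * inv x) = (x * (x * inv x)) * inv x" by (simp add: ac_simps)
  then show ?thesis by (simp add: mult_inv_absorb)
qed

end

lemma equivp_derivable: "equivp (derivable E)"
  by (rule equivpI) (auto intro: reflpI sympI transpI derivable.refl derivable.sym derivable.trans)

fun inst3 :: "trm \<Rightarrow> trm \<Rightarrow> trm \<Rightarrow> nat \<Rightarrow> trm" where
  "inst3 a b c 0 = a"
| "inst3 a b c (Suc 0) = b"
| "inst3 a b c (Suc (Suc n)) = c"

lemma inst3_2 [simp]: "inst3 a b c 2 = c"
  by (simp add: numeral_2_eq_2)

lemma Md_instance:
  "(s, t) \<in> Md \<Longrightarrow> derivable Md (subst (inst3 a b c) s) (subst (inst3 a b c) t)"
  by (rule derivable.ax)

lemma Md_laws: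
  "derivable Md (Plus (Plus a b) c) (Plus a (Plus b c))"
  "derivable Md (Plus a b) (Plus b a)"
  "derivable Md (Plus a Zero) a"
  "derivable Md (Plus a (Neg a)) Zero"
  "derivable Md (Times (Times a b) c) (Times a (Times b c))"
  "derivable Md (Times a b) (Times b a)"
  "derivable Md (Times One a) a"
  "derivable Md (Times a (Plus b c)) (Plus (Times a b) (Times a c))"
  "derivable Md (Inv (Inv a)) a"
  "derivable Md (Times a (Times a (Inv a))) a"
  subgoal by (rule Md_instance[of "Plus (Plus (Var 0) (Var 1)) (Var 2)"
        "Plus (Var 0) (Plus (Var 1) (Var 2))", simplified])
      (simp add: Md_def Let_def)
  subgoal by (rule Md_instance[of "Plus (Var 0) (Var 1)" "Plus (Var 1) (Var 0)", simplified])
      (simp add: Md_def Let_def)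
  subgoal by (rule Md_instance[of "Plus (Var 0) Zero" "Var 0", simplified])
      (simp add: Md_def Let_def)
  subgoal by (rule Md_instance[of "Plus (Var 0) (Neg (Var 0))" "Zero", simplified])
      (simp add: Md_def Let_def)
  subgoal by (rule Md_instance[of "Times (Times (Var 0) (Var 1)) (Var 2)"
        "Times (Var 0) (Times (Var 1) (Var 2))", simplified])
      (simp add: Md_def Let_def)
  subgoal by (rule Md_instance[of "Times (Var 0) (Var 1)" "Times (Var 1) (Var 0)", simplified])
      (simp add: Md_def Let_def)
  subgoal by (rule Md_instance[of "Times One (Var 0)" "Var 0", simplified])
      (simp add: Md_def Let_def)
  subgoal by (rule Md_instance[of "Times (Var 0) (Plus (Var 1) (Var 2))"
        "Plus (Times (Var 0) (Var 1)) (Times (Var 0) (Var 2))", simplified])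
      (simp add: Md_def Let_def)
  subgoal by (rule Md_instance[of "Inv (Inv (Var 0))" "Var 0", simplified])
      (simp add: Md_def Let_def)
  subgoal by (rule Md_instance[of "Times (Var 0) (Times (Var 0) (Inv (Var 0)))"
        "Var 0", simplified])
      (simp add: Md_def Let_def)
  done

quotient_type q = trm / "derivable Md"
  by (rule equivp_derivable)

text \<open>The ring equations of Md make the quotient a commutative ring with unit.\<close>
instantiation q :: "{comm_ring, comm_monoid_mult}"
begin

lift_definition zero_q :: q is Zero .
lift_definition one_q :: q is One .
lift_definition plus_q :: "q \<Rightarrow> q \<Rightarrow> q" is Plus by (rule derivable.cong_plus)
lift_definition times_q :: "q \<Rightarrow> q \<Rightarrow> q" is Times by (rule derivable.cong_times)
lift_definition uminus_q :: "q \<Rightarrow> q" is Neg by (rule derivable.cong_neg)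
definition minus_q :: "q \<Rightarrow> q \<Rightarrow> q" where "minus_q a b = a + - b"

instance
proof
  fix a b c :: q
  show plus_comm: "a + b = b + a" for a b :: q by transfer (rule Md_laws)
  show times_comm: "a * b = b * a" for a b :: q by transfer (rule Md_laws)
  show "a + b + c = a + (b + c)" by transfer (rule Md_laws)
  show "a * b * c = a * (b * c)" by transfer (rule Md_laws)
  show "1 * a = a" by transfer (rule Md_laws)
  show "a - b = a + - b" by (simp add: minus_q_def)
  have "a + 0 = a" by transfer (rule Md_laws)
  then show "0 + a = a" by (simp add: plus_comm)
  have "a + - a = 0" by transfer (rule Md_laws)
  then show "- a + a = 0" by (simp add: plus_comm)
  have "c * (a + b) = c * a + c * b" by transfer (rule Md_laws)
  then show "(a + b) * c = a * c + b * c" by (simp add: times_comm)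
qed

end

lift_definition inv_q :: "q \<Rightarrow> q" is Inv by (rule derivable.cong_inv)

interpretation q: meadow_inverse inv_q
  by unfold_locales (transfer, rule Md_laws)+

lemma derivable_fill: "derivable E r r' \<Longrightarrow> derivable E (fill C r) (fill C r')"
  by (induction C) (auto intro: derivable.intros)

lift_definition ctx_fun :: "ctx \<Rightarrow> q \<Rightarrow> q" is fill
  by (rule derivable_fill)

lemma ctx_fun_simps:
  "ctx_fun Hole x = x"
  "ctx_fun (PlusL C b) x = ctx_fun C x + abs_q b"
  "ctx_fun (PlusR a C) x = abs_q a + ctx_fun C x"
  "ctx_fun (TimesL C b) x = ctx_fun C x * abs_q b"
  "ctx_fun (TimesR a C) x = abs_q a * ctx_fun C x"
  "ctx_fun (NegC C) x = - ctx_fun C x"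
  "ctx_fun (InvC C) x = inv_q (ctx_fun C x)"
  by (induct x rule: q.abs_induct,
      simp add: ctx_fun.abs_eq plus_q.abs_eq times_q.abs_eq uminus_q.abs_eq inv_q.abs_eq)+

lemma idempotent_propagation:
  assumes idem: "e * e = e"
  shows "e * ctx_fun C x = e * ctx_fun C (e * x)"
proof (induction C arbitrary: x)
  case Hole
  show ?case using idem by (simp add: ctx_fun_simps mult.assoc[symmetric])
next
  case (TimesL C b)
  have "e * (ctx_fun C x * abs_q b) = (e * ctx_fun C x) * abs_q b" by (simp add: mult.assoc)
  also have "\<dots> = (e * ctx_fun C (e * x)) * abs_q b" using TimesL[of x] by simp
  finally show ?case by (simp add: ctx_fun_simps mult.assoc)
next
  case (InvC C)
  have "e * inv_q (ctx_fun C x) = e * inv_q (e * ctx_fun C x)"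
    using q.idempotent_mult_inv[OF idem] by simp
  also have "\<dots> = e * inv_q (e * ctx_fun C (e * x))" using InvC by simp
  also have "\<dots> = e * inv_q (ctx_fun C (e * x))"
    using q.idempotent_mult_inv[OF idem] by simp
  finally show ?case by (simp add: ctx_fun_simps)
qed (simp_all add: ctx_fun_simps distrib_left mult.left_commute[of e])

lemma derivable_propagation:
  assumes "abs_q e * abs_q e = abs_q e"
  shows "derivable Md (Times e (fill C r)) (Times e (fill C (Times e r)))"
  using idempotent_propagation[OF assms, of C "abs_q r"]
  by (simp add: ctx_fun.abs_eq times_q.abs_eq q.abs_eq_iff)

text \<open>1_t is idempotent modulo Md, being a pseudo unit of the meadow.\<close>
lemma one_of_idempotent: "abs_q (one_of t) * abs_q (one_of t) = abs_q (one_of t)"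
proof -
  have "abs_q (one_of t) = abs_q t * inv_q (abs_q t)"
    by (simp add: one_of_def times_q.abs_eq inv_q.abs_eq)
  then show ?thesis by (simp add: q.pseudo_unit_idempotent)
qed

text \<open>0_t = 1 - 1_t is idempotent modulo Md as well.\<close>
lemma zero_of_idempotent: "abs_q (zero_of t) * abs_q (zero_of t) = abs_q (zero_of t)"
proof -
  have "abs_q (zero_of t) = 1 - abs_q (one_of t)"
    by (simp add: zero_of_def minus_q_def plus_q.abs_eq uminus_q.abs_eq one_q.abs_eq)
  then show ?thesis by (simp add: idempotent_complement[OF one_of_idempotent])
qed

theorem mainTheorem7:
  shows "\<forall>t r C.
    derivable Md (Times (one_of t) (fill C r)) (Times (one_of t) (fill C (Times (one_of t) r))) \<and>
    derivable Md (Times (zero_of t) (fill C r)) (Times (zero_of t) (fill C (Times (zero_of t) r)))"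
  using derivable_propagation[OF one_of_idempotent] derivable_propagation[OF zero_of_idempotent]
  by blast

end
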